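(* Let $\kappa$ be an infinite cardinal, let $(A,B,C)\in S\setminus B_0$ where $B_0=\{(X,\,X\cap Z,\,Z): X,Z\in\mathcal{F}(\kappa),\ X\sim Z\}$, and let $(A',B',C')$ be a complement of $(A,B,C)$ in $S$. If $B\subseteq A$, then $B'\not\subseteq A'$.
   Context: $\mathcal{F}(\kappa)$ is the Boolean lattice of subsets $X\subseteq\kappa$ that are finite or cofinite. For $X,Z\in\mathcal{F}(\kappa)$, $X\sim Z$ means that either both $X,Z$ are finite or both $\kappa\setminus X,\kappa\setminus Z$ are finite. Let $\mu(A,B,C)=(A\cap B)\cup(A\cap C)\cup(B\cap C)$; a triple is balanced if $A\cap B=A\cap C=B\cap C$. $S$ is the set of balanced triples $(A,B,C)\in\mathcal{F}(\kappa)^3$ with $C\setminus\mu(A,B,C)$ finite, ordered componentwise; it is a bounded lattice with componentwise meet, join $(A,B,C)\vee(A',B',C')=(U_1\cup m,U_2\cup m,U_3\cup m)$ where $U_1=A\cup A'$, $U_2=B\cup B'$, $U_3=C\cup C'$, $m=\mu(U_1,U_2,U_3)$, and bounds $(\emptyset,\emptyset,\emptyset)$, $(\kappa,\kappa,\kappa)$. A complement of $x$ in $S$ is $y\in S$ with $x\wedge y$ the least and $x\vee y$ the greatest element. (In the paper the set $B_0$ is called $B$.) *)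

theory Defs
  imports Main
begin

text \<open>The infinite cardinal kappa is modelled as the universe of an infinite type 'a.\<close>

definition FinCof :: "'a set set" where
  "FinCof = {X. finite X \<or> finite (- X)}"

definition simF :: "'a set \<Rightarrow> 'a set \<Rightarrow> bool" where
  "simF X Z \<longleftrightarrow> (finite X \<and> finite Z) \<or> (finite (- X) \<and> finite (- Z))"

definition mu :: "'a set \<Rightarrow> 'a set \<Rightarrow> 'a set \<Rightarrow> 'a set" where
  "mu A B C = (A \<inter> B) \<union> (A \<inter> C) \<union> (B \<inter> C)"

definition balanced :: "'a set \<Rightarrow> 'a set \<Rightarrow> 'a set \<Rightarrow> bool" where
  "balanced A B C \<longleftrightarrow> A \<inter> B = A \<inter> C \<and> A \<inter> C = B \<inter> C"

definition S :: "('a set \<times> 'a set \<times> 'a set) set" where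
  "S = {(A, B, C). A \<in> FinCof \<and> B \<in> FinCof \<and> C \<in> FinCof \<and> balanced A B C
                  \<and> finite (C - mu A B C)}"

definition meetS :: "'a set \<times> 'a set \<times> 'a set \<Rightarrow> 'a set \<times> 'a set \<times> 'a set \<Rightarrow> 'a set \<times> 'a set \<times> 'a set" where
  "meetS x y = (case x of (A, B, C) \<Rightarrow> case y of (A', B', C') \<Rightarrow> (A \<inter> A', B \<inter> B', C \<inter> C'))"

definition joinS :: "'a set \<times> 'a set \<times> 'a set \<Rightarrow> 'a set \<times> 'a set \<times> 'a set \<Rightarrow> 'a set \<times> 'a set \<times> 'a set" where
  "joinS x y = (case x of (A, B, C) \<Rightarrow> case y of (A', B', C') \<Rightarrow>
     (let U1 = A \<union> A'; U2 = B \<union> B'; U3 = C \<union> C'; m = mu U1 U2 U3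
      in (U1 \<union> m, U2 \<union> m, U3 \<union> m)))"

definition botS :: "'a set \<times> 'a set \<times> 'a set" where
  "botS = ({}, {}, {})"

definition topS :: "'a set \<times> 'a set \<times> 'a set" where
  "topS = (UNIV, UNIV, UNIV)"

definition is_complementS :: "'a set \<times> 'a set \<times> 'a set \<Rightarrow> 'a set \<times> 'a set \<times> 'a set \<Rightarrow> bool" where
  "is_complementS x y \<longleftrightarrow> y \<in> S \<and> meetS x y = botS \<and> joinS x y = topS"

definition B0 :: "('a set \<times> 'a set \<times> 'a set) set" where
  "B0 = {(X, X \<inter> Z, Z) | X Z. X \<in> FinCof \<and> Z \<in> FinCof \<and> simF X Z}"

end

theory Submission
  imports Defs
begin

text \<open>If \<open>B \<subseteq> A\<close>, balancedness forces \<open>B = A \<inter> C\<close>, so the triple is determined by \<open>A\<close> and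
  \<open>C\<close> with \<open>C - A\<close> finite; outside \<open>B\<^sub>0\<close> this leaves only \<open>A\<close> cofinite and \<open>C\<close> finite.
  A complement \<open>(A', B', C')\<close> is disjoint from \<open>A\<close>, so \<open>A'\<close> is finite, and if also
  \<open>B' \<subseteq> A'\<close> then \<open>C'\<close> is finite as well. But then the third coordinate of the join is
  \<open>C \<union> C'\<close>, a finite set, which cannot be the whole infinite universe.\<close>

lemma balanced_subset_imp_eq_inter:
  assumes "balanced A B C" and "B \<subseteq> A"
  shows "B = A \<inter> C"
  using assms unfolding balanced_def by blast

lemma mu_subset_third:
  assumes "B \<subseteq> C"
  shows "mu A B C \<subseteq> C"
  using assms unfolding mu_def by blast

lemma S_subset_imp_finite_diff:
  assumes "(A, B, C) \<in> S" and "B \<subseteq> A"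
  shows "B = A \<inter> C" and "finite (C - A)"
proof -
  from assms(1) have bal: "balanced A B C" and fin: "finite (C - mu A B C)"
    by (auto simp: S_def)
  show B: "B = A \<inter> C"
    using bal assms(2) by (rule balanced_subset_imp_eq_inter)
  then have "C - mu A B C = C - A"
    unfolding mu_def by blast
  with fin show "finite (C - A)" by simp
qed

lemma S_subset_not_B0_imp_cofinite_finite:
  fixes A B C :: "'a set"
  assumes inf: "infinite (UNIV :: 'a set)"
    and ABC: "(A, B, C) \<in> S" and "(A, B, C) \<notin> B0" and "B \<subseteq> A"
  shows "finite (- A)" and "finite C"
proof -
  have B: "B = A \<inter> C" and CA: "finite (C - A)"
    using S_subset_imp_finite_diff[OF ABC \<open>B \<subseteq> A\<close>] by auto
  have FC: "A \<in> FinCof" "C \<in> FinCof"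
    using ABC by (auto simp: S_def)
  with B \<open>(A, B, C) \<notin> B0\<close> have "\<not> simF A C"
    unfolding B0_def by blast
  moreover have "\<not> (finite A \<and> finite (- C))"
  proof
    assume "finite A \<and> finite (- C)"
    with CA have "finite ((C - A) \<union> A \<union> - C)" by simp
    moreover have "(C - A) \<union> A \<union> - C = UNIV" by blast
    ultimately have "finite (UNIV :: 'a set)" by simp
    with inf show False by contradiction
  qed
  ultimately show "finite (- A)" and "finite C"
    using FC unfolding FinCof_def simF_def by blast+
qed

lemma joinS_third_eq_union:
  assumes "B \<subseteq> C" and "B' \<subseteq> C'"
  shows "snd (snd (joinS (A, B, C) (A', B', C'))) = C \<union> C'"
proof -
  have "mu (A \<union> A') (B \<union> B') (C \<union> C') \<subseteq> C \<union> C'"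
    using assms by (intro mu_subset_third) blast
  then show ?thesis
    unfolding joinS_def Let_def by auto
qed

theorem lemma5p4:
  fixes A B C A' B' C' :: "'a set"
  assumes "infinite (UNIV :: 'a set)"
    and "(A, B, C) \<in> S"
    and "(A, B, C) \<notin> B0"
    and "is_complementS (A, B, C) (A', B', C')"
    and "B \<subseteq> A"
  shows "\<not> B' \<subseteq> A'"
proof
  assume "B' \<subseteq> A'"
  have cofA: "finite (- A)" and finC: "finite C"
    using S_subset_not_B0_imp_cofinite_finite assms(1-3,5) by blast+
  have S': "(A', B', C') \<in> S" and meet: "meetS (A, B, C) (A', B', C') = botS"
    and join: "joinS (A, B, C) (A', B', C') = topS"
    using assms(4) unfolding is_complementS_def by auto
  have B: "B = A \<inter> C" using S_subset_imp_finite_diff assms(2,5) by blast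
  have B': "B' = A' \<inter> C'" and C'A': "finite (C' - A')"
    using S_subset_imp_finite_diff[OF S' \<open>B' \<subseteq> A'\<close>] by auto
  have "A' \<subseteq> - A" using meet unfolding meetS_def botS_def by auto
  then have "finite A'" using cofA by (rule finite_subset)
  then have finC': "finite C'"
    using C'A' by (metis Un_Diff_cancel2 finite_Un finite_subset sup_ge1)
  have "C \<union> C' = UNIV"
    using joinS_third_eq_union[of B C B' C' A A'] B B' join by (simp add: topS_def)
  with finC finC' assms(1) show False by (metis finite_Un)
qed

end
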